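(* Suppose $\alpha$ is a computable real number. Then there exists a pair $(A,E)$ of $\mathfrak{PR}$-sequences $A,E:\mathbb{N}\to\mathbb{Q}$ such that $E(\mathbb{N})$ contains elements arbitrarily close to $0$ and $|A(x)-\alpha|\le E(x)$ for all $x\in\mathbb{N}$.
   Context: $\mathbb{N}=\{0,1,2,\dots\}$. $\mathfrak{PR}$ denotes the primitive recursive functions and $\mathfrak{R}$ the (total) recursive functions $\mathbb{N}^n\to\mathbb{N}$. For $\mathcal{F}\in\{\mathfrak{PR},\mathfrak{R}\}$, an $\mathcal{F}$-sequence is a function $A:\mathbb{N}\to\mathbb{Q}$ of the form $A(x)=\frac{f(x)-g(x)}{h(x)+1}$ with $f,g,h:\mathbb{N}\to\mathbb{N}$ in $\mathcal{F}$. A real $\alpha$ is computable if there is an $\mathfrak{R}$-sequence $A$ with $|A(x)-\alpha|\le\frac1{x+1}$ for all $x$. *)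

theory Defs
  imports Complex_Main
begin

text \<open>Primitive recursive functions of arity n, represented as functions on
argument lists (only lists of length n are meaningful).\<close>

fun prim_rec_iter :: "(nat list \<Rightarrow> nat) \<Rightarrow> (nat list \<Rightarrow> nat) \<Rightarrow> nat \<Rightarrow> nat list \<Rightarrow> nat" where
  "prim_rec_iter g h 0 xs = g xs"
| "prim_rec_iter g h (Suc k) xs = h (k # prim_rec_iter g h k xs # xs)"

inductive PRf :: "nat \<Rightarrow> (nat list \<Rightarrow> nat) \<Rightarrow> bool" where
  zero: "PRf n (\<lambda>xs. 0)"
| succ: "PRf 1 (\<lambda>xs. Suc (hd xs))"
| proj: "i < n \<Longrightarrow> PRf n (\<lambda>xs. xs ! i)"
| comp: "PRf m g \<Longrightarrow> (\<And>i. i < m \<Longrightarrow> PRf n (hs i))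
          \<Longrightarrow> PRf n (\<lambda>xs. g (map (\<lambda>i. hs i xs) [0..<m]))"
| prec: "PRf n g \<Longrightarrow> PRf (Suc (Suc n)) h
          \<Longrightarrow> PRf (Suc n) (\<lambda>xs. prim_rec_iter g h (hd xs) (tl xs))"

inductive Rf :: "nat \<Rightarrow> (nat list \<Rightarrow> nat) \<Rightarrow> bool" where
  zero: "Rf n (\<lambda>xs. 0)"
| succ: "Rf 1 (\<lambda>xs. Suc (hd xs))"
| proj: "i < n \<Longrightarrow> Rf n (\<lambda>xs. xs ! i)"
| comp: "Rf m g \<Longrightarrow> (\<And>i. i < m \<Longrightarrow> Rf n (hs i))
          \<Longrightarrow> Rf n (\<lambda>xs. g (map (\<lambda>i. hs i xs) [0..<m]))"
| prec: "Rf n g \<Longrightarrow> Rf (Suc (Suc n)) h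
          \<Longrightarrow> Rf (Suc n) (\<lambda>xs. prim_rec_iter g h (hd xs) (tl xs))"
| mu: "Rf (Suc n) g \<Longrightarrow> (\<And>xs. length xs = n \<Longrightarrow> \<exists>y. g (y # xs) = 0)
          \<Longrightarrow> Rf n (\<lambda>xs. LEAST y. g (y # xs) = 0)"

definition PR1 :: "(nat \<Rightarrow> nat) \<Rightarrow> bool" where
  "PR1 f \<longleftrightarrow> (\<exists>F. PRf 1 F \<and> (\<forall>x. f x = F [x]))"

definition R1 :: "(nat \<Rightarrow> nat) \<Rightarrow> bool" where
  "R1 f \<longleftrightarrow> (\<exists>F. Rf 1 F \<and> (\<forall>x. f x = F [x]))"

definition F_sequence :: "((nat \<Rightarrow> nat) \<Rightarrow> bool) \<Rightarrow> (nat \<Rightarrow> rat) \<Rightarrow> bool" where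
  "F_sequence P A \<longleftrightarrow> (\<exists>f g h. P f \<and> P g \<and> P h \<and>
      (\<forall>x. A x = (of_nat (f x) - of_nat (g x)) / (of_nat (h x) + 1)))"

definition PR_sequence :: "(nat \<Rightarrow> rat) \<Rightarrow> bool" where
  "PR_sequence A \<longleftrightarrow> F_sequence PR1 A"

definition R_sequence :: "(nat \<Rightarrow> rat) \<Rightarrow> bool" where
  "R_sequence A \<longleftrightarrow> F_sequence R1 A"

definition computable_real :: "real \<Rightarrow> bool" where
  "computable_real \<alpha> \<longleftrightarrow> (\<exists>A. R_sequence A \<and>
      (\<forall>x. \<bar>real_of_rat (A x) - \<alpha>\<bar> \<le> 1 / (real x + 1)))"

end

theory Submission
  imports Defs
begin

text \<open>Every total recursive f has a primitive recursive clock G: G (t, x) = 0 as long as the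
  computation of f x has not halted within t steps, and G (t, x) = f x + 1 from then on. This is
  shown along the inductive definition of Rf; minimisation becomes, at each time t, a bounded
  search among the candidates below t.

  Let A m = (f m - g m) / (h m + 1) approximate \<alpha> within 1 / (m + 1). Dovetailing the clocks
  of f, g and h gives a primitive recursive, unbounded M x, the number of approximations
  A 0, ..., A (M x - 1) finished within x steps, and these can be read off the clocks at time x.
  So A (M x - 1) with error 1 / M x is a pair of PR-sequences, with A = 0 and the error
  \<lceil>|\<alpha>|\<rceil> as long as M x = 0.\<close>

section \<open>Primitive recursion on argument lists\<close>

text \<open>PRf n describes a function on all lists, but only its values on lists of length n matter.\<close>

definition prim_rec :: "nat \<Rightarrow> (nat list \<Rightarrow> nat) \<Rightarrow> bool" where
  "prim_rec n F \<longleftrightarrow> (\<exists>G. PRf n G \<and> (\<forall>xs. length xs = n \<longrightarrow> F xs = G xs))"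

lemma prim_rec_cong:
  "prim_rec n f \<Longrightarrow> (\<And>xs. length xs = n \<Longrightarrow> f xs = g xs) \<Longrightarrow> prim_rec n g"
  unfolding prim_rec_def by metis

lemma prim_rec_zero: "prim_rec n (\<lambda>_. 0)"
  unfolding prim_rec_def using PRf.zero by blast

lemma prim_rec_succ: "prim_rec 1 (\<lambda>xs. Suc (xs ! 0))"
  unfolding prim_rec_def using PRf.succ by (auto simp: length_Suc_conv)

lemma prim_rec_proj: "i < n \<Longrightarrow> prim_rec n (\<lambda>xs. xs ! i)"
  unfolding prim_rec_def using PRf.proj by blast

lemma prim_rec_comp:
  assumes "prim_rec m g" and "\<And>i. i < m \<Longrightarrow> prim_rec n (hs i)"
  shows "prim_rec n (\<lambda>xs. g (map (\<lambda>i. hs i xs) [0..<m]))"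
proof -
  obtain G where G: "PRf m G" "\<And>xs. length xs = m \<Longrightarrow> g xs = G xs"
    using assms(1) unfolding prim_rec_def by blast
  obtain Hs where Hs: "\<And>i. i < m \<Longrightarrow> PRf n (Hs i)"
    "\<And>i xs. i < m \<Longrightarrow> length xs = n \<Longrightarrow> hs i xs = Hs i xs"
    using assms(2) unfolding prim_rec_def by metis
  have "g (map (\<lambda>i. hs i xs) [0..<m]) = G (map (\<lambda>i. Hs i xs) [0..<m])" if "length xs = n" for xs
    using that by (auto simp: G(2) Hs(2) intro!: arg_cong[where f = G] map_cong)
  moreover have "PRf n (\<lambda>xs. G (map (\<lambda>i. Hs i xs) [0..<m]))"
    by (rule PRf.comp[OF G(1)]) (rule Hs(1))
  ultimately show ?thesis
    unfolding prim_rec_def by auto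
qed

lemma prim_rec_iter_cong:
  assumes "length ys = n" and "\<And>xs. length xs = n \<Longrightarrow> g xs = G xs"
    and "\<And>xs. length xs = Suc (Suc n) \<Longrightarrow> h xs = H xs"
  shows "prim_rec_iter g h k ys = prim_rec_iter G H k ys"
  using assms by (induction k) auto

lemma prim_rec_prec:
  assumes "prim_rec n g" and "prim_rec (Suc (Suc n)) h"
  shows "prim_rec (Suc n) (\<lambda>xs. prim_rec_iter g h (hd xs) (tl xs))"
proof -
  obtain G where G: "PRf n G" "\<And>xs. length xs = n \<Longrightarrow> g xs = G xs"
    using assms(1) unfolding prim_rec_def by blast
  obtain H where H: "PRf (Suc (Suc n)) H" "\<And>xs. length xs = Suc (Suc n) \<Longrightarrow> h xs = H xs"
    using assms(2) unfolding prim_rec_def by blast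
  show ?thesis
    unfolding prim_rec_def using PRf.prec[OF G(1) H(1)] prim_rec_iter_cong[OF _ G(2) H(2)] by auto
qed

definition prim_rec_list :: "nat \<Rightarrow> nat \<Rightarrow> (nat list \<Rightarrow> nat list) \<Rightarrow> bool" where
  "prim_rec_list n m L \<longleftrightarrow>
     (\<forall>ys. length ys = n \<longrightarrow> length (L ys) = m) \<and> (\<forall>i<m. prim_rec n (\<lambda>ys. L ys ! i))"

lemma prim_rec_compose:
  assumes "prim_rec m f" and "prim_rec_list n m L"
  shows "prim_rec n (\<lambda>ys. f (L ys))"
proof (rule prim_rec_cong)
  show "prim_rec n (\<lambda>ys. f (map (\<lambda>i. L ys ! i) [0..<m]))"
    using assms unfolding prim_rec_list_def by (intro prim_rec_comp) auto
  show "f (map (\<lambda>i. L ys ! i) [0..<m]) = f (L ys)" if "length ys = n" for ys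
    using assms(2) that map_nth[of "L ys"] unfolding prim_rec_list_def by simp
qed

lemma prim_rec_list_Nil: "prim_rec_list n 0 (\<lambda>_. [])"
  by (simp add: prim_rec_list_def)

lemma prim_rec_list_Cons:
  assumes "prim_rec n a" and "prim_rec_list n m L"
  shows "prim_rec_list n (Suc m) (\<lambda>ys. a ys # L ys)"
  using assms unfolding prim_rec_list_def by (auto simp: less_Suc_eq_0_disj)

lemma prim_rec_list_map:
  "(\<And>i. i < m \<Longrightarrow> prim_rec n (h i)) \<Longrightarrow> prim_rec_list n m (\<lambda>ys. map (\<lambda>i. h i ys) [0..<m])"
  by (simp add: prim_rec_list_def)

lemma prim_rec_list_drop:
  assumes "n = k + m"
  shows "prim_rec_list n m (\<lambda>ys. drop k ys)"
proof -
  have "prim_rec n (\<lambda>ys. drop k ys ! i)" if "i < m" for i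
    by (rule prim_rec_cong[OF prim_rec_proj[of "k + i"]]) (use assms that in auto)
  then show ?thesis
    using assms unfolding prim_rec_list_def by simp
qed

lemma prim_rec_list_id: "prim_rec_list n n (\<lambda>ys. ys)"
  using prim_rec_list_drop[of n 0 n] by simp

lemma prim_rec_const: "prim_rec n (\<lambda>_. c)"
proof (induction c)
  case (Suc c)
  have "prim_rec n (\<lambda>ys. (\<lambda>xs. Suc (xs ! 0)) [c])"
    by (intro prim_rec_compose[OF prim_rec_succ[unfolded One_nat_def]]
        prim_rec_list_Cons prim_rec_list_Nil Suc)
  then show ?case by simp
qed (rule prim_rec_zero)

lemma prim_rec_comp1:
  assumes "prim_rec 1 (\<lambda>xs. \<phi> (xs ! 0))" and "prim_rec n f"
  shows "prim_rec n (\<lambda>xs. \<phi> (f xs))"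
  using prim_rec_compose[OF assms(1)[unfolded One_nat_def]
      prim_rec_list_Cons[OF assms(2) prim_rec_list_Nil]]
  by simp

lemma prim_rec_comp2:
  assumes "prim_rec 2 (\<lambda>xs. \<phi> (xs ! 0) (xs ! 1))" and "prim_rec n f" and "prim_rec n g"
  shows "prim_rec n (\<lambda>xs. \<phi> (f xs) (g xs))"
  using prim_rec_compose[OF assms(1)[unfolded numeral_2_eq_2]
      prim_rec_list_Cons[OF assms(2) prim_rec_list_Cons[OF assms(3) prim_rec_list_Nil]]]
  by simp

lemma prim_rec_add: "prim_rec 2 (\<lambda>xs. xs ! 0 + xs ! 1)"
proof -
  have "prim_rec 3 (\<lambda>ys. Suc (ys ! 1))"
    by (rule prim_rec_comp1[OF prim_rec_succ prim_rec_proj]) simp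
  then have pr: "prim_rec 2 (\<lambda>xs. prim_rec_iter (\<lambda>xs. xs ! 0) (\<lambda>ys. Suc (ys ! 1)) (hd xs) (tl xs))"
    using prim_rec_prec[of 1] prim_rec_proj[of 0 1] by (simp add: numeral_eq_Suc)
  have "prim_rec_iter (\<lambda>xs. xs ! 0) (\<lambda>ys. Suc (ys ! 1)) k zs = zs ! 0 + k" for k zs
    by (induction k) auto
  then show ?thesis
    by (intro prim_rec_cong[OF pr]) (auto simp: length_Suc_conv numeral_2_eq_2)
qed

lemma prim_rec_pred: "prim_rec 1 (\<lambda>xs. xs ! 0 - 1)"
proof -
  have pr: "prim_rec 1 (\<lambda>xs. prim_rec_iter (\<lambda>_. 0) (\<lambda>ys. ys ! 0) (hd xs) (tl xs))"
    using prim_rec_prec[of 0] prim_rec_zero prim_rec_proj[of 0 2] by (simp add: numeral_eq_Suc)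
  have "prim_rec_iter (\<lambda>_. 0) (\<lambda>ys. ys ! 0) k zs = k - 1" for k zs
    by (induction k) auto
  then show ?thesis
    by (intro prim_rec_cong[OF pr]) (auto simp: length_Suc_conv)
qed

lemma prim_rec_diff: "prim_rec 2 (\<lambda>xs. xs ! 1 - xs ! 0)"
proof -
  have "prim_rec 3 (\<lambda>ys. ys ! 1 - 1)"
    by (rule prim_rec_comp1[OF prim_rec_pred prim_rec_proj]) simp
  then have pr: "prim_rec 2 (\<lambda>xs. prim_rec_iter (\<lambda>xs. xs ! 0) (\<lambda>ys. ys ! 1 - 1) (hd xs) (tl xs))"
    using prim_rec_prec[of 1] prim_rec_proj[of 0 1] by (simp add: numeral_eq_Suc)
  have "prim_rec_iter (\<lambda>xs. xs ! 0) (\<lambda>ys. ys ! 1 - 1) k zs = zs ! 0 - k" for k zs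
    by (induction k) auto
  then show ?thesis
    by (intro prim_rec_cong[OF pr]) (auto simp: length_Suc_conv numeral_2_eq_2)
qed

lemma prim_rec_mult: "prim_rec 2 (\<lambda>xs. xs ! 0 * xs ! 1)"
proof -
  have "prim_rec 3 (\<lambda>ys. ys ! 1 + ys ! 2)"
    by (rule prim_rec_comp2[OF prim_rec_add prim_rec_proj prim_rec_proj]) simp_all
  then have pr: "prim_rec 2 (\<lambda>xs. prim_rec_iter (\<lambda>_. 0) (\<lambda>ys. ys ! 1 + ys ! 2) (hd xs) (tl xs))"
    using prim_rec_prec[of 1] prim_rec_zero by (simp add: numeral_eq_Suc)
  have "prim_rec_iter (\<lambda>_. 0) (\<lambda>ys. ys ! 1 + ys ! 2) k zs = k * zs ! 0" for k zs
    by (induction k) auto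
  then show ?thesis
    by (intro prim_rec_cong[OF pr]) (auto simp: length_Suc_conv numeral_2_eq_2)
qed

lemma prim_rec_plus: "prim_rec n f \<Longrightarrow> prim_rec n g \<Longrightarrow> prim_rec n (\<lambda>xs. f xs + g xs)"
  by (rule prim_rec_comp2[OF prim_rec_add])

lemma prim_rec_minus: "prim_rec n f \<Longrightarrow> prim_rec n g \<Longrightarrow> prim_rec n (\<lambda>xs. f xs - g xs)"
  by (rule prim_rec_comp2[where \<phi> = "\<lambda>a b. b - a", OF prim_rec_diff])

lemma prim_rec_times: "prim_rec n f \<Longrightarrow> prim_rec n g \<Longrightarrow> prim_rec n (\<lambda>xs. f xs * g xs)"
  by (rule prim_rec_comp2[OF prim_rec_mult])

lemma prim_rec_if_zero:
  assumes "prim_rec n c" and "prim_rec n f" and "prim_rec n g"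
  shows "prim_rec n (\<lambda>xs. if c xs = 0 then f xs else g xs)"
proof -
  have "prim_rec n (\<lambda>xs. (1 - c xs) * f xs + (1 - (1 - c xs)) * g xs)"
    by (intro prim_rec_plus prim_rec_times prim_rec_minus prim_rec_const assms)
  then show ?thesis by (rule prim_rec_cong) auto
qed

lemma prim_rec_if_all_nonzero:
  assumes "\<And>i. i < (m::nat) \<Longrightarrow> prim_rec n (f i)" and "prim_rec n g"
  shows "prim_rec n (\<lambda>xs. if \<forall>i<m. f i xs \<noteq> 0 then g xs else 0)"
proof -
  have "prim_rec n (\<lambda>xs. \<Prod>i<m. f i xs)"
    using assms(1) by (induction m) (simp_all add: prim_rec_const prim_rec_times)
  then have "prim_rec n (\<lambda>xs. if (\<Prod>i<m. f i xs) = 0 then 0 else g xs)"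
    by (intro prim_rec_if_zero prim_rec_const assms(2))
  then show ?thesis
    by (rule prim_rec_cong) (auto simp: lessThan_def)
qed

lemma PR1_iff_prim_rec: "PR1 f \<longleftrightarrow> prim_rec 1 (\<lambda>xs. f (xs ! 0))"
proof
  assume "PR1 f"
  then obtain F where "PRf 1 F" "\<And>x. f x = F [x]"
    unfolding PR1_def by blast
  then show "prim_rec 1 (\<lambda>xs. f (xs ! 0))"
    unfolding prim_rec_def by (auto simp: length_Suc_conv)
next
  assume "prim_rec 1 (\<lambda>xs. f (xs ! 0))"
  then obtain F where "PRf 1 F" "\<And>xs. length xs = 1 \<Longrightarrow> f (xs ! 0) = F xs"
    unfolding prim_rec_def by blast
  then show "PR1 f"
    unfolding PR1_def by (metis One_nat_def length_Cons list.size(3) nth_Cons_0)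
qed

section \<open>Clocked computations\<close>

definition clocks :: "(nat \<Rightarrow> nat) \<Rightarrow> nat \<Rightarrow> bool" where
  "clocks s v \<longleftrightarrow>
     (\<forall>\<^sub>F t in sequentially. s t \<noteq> 0) \<and>
     (\<forall>t t'. t \<le> t' \<longrightarrow> s t \<noteq> 0 \<longrightarrow> s t' \<noteq> 0) \<and>
     (\<forall>t. s t \<noteq> 0 \<longrightarrow> s t = Suc v)"

lemma
  assumes "clocks s v"
  shows clocks_eventually: "\<forall>\<^sub>F t in sequentially. s t \<noteq> 0"
    and clocks_mono: "t \<le> t' \<Longrightarrow> s t \<noteq> 0 \<Longrightarrow> s t' \<noteq> 0"
    and clocks_value: "s t \<noteq> 0 \<Longrightarrow> s t = Suc v"
  using assms unfolding clocks_def by blast+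

lemma clocks_const: "clocks (\<lambda>_. Suc v) v"
  by (simp add: clocks_def)

lemma clocks_comp:
  assumes s: "\<And>i. i < m \<Longrightarrow> clocks (s i) (v i)" and u: "clocks (\<lambda>t. u t (map v [0..<m])) w"
  shows "clocks (\<lambda>t. if \<forall>i<m. s i t \<noteq> 0 then u t (map (\<lambda>i. s i t - 1) [0..<m]) else 0) w"
proof -
  have shift: "map (\<lambda>i. s i t - 1) [0..<m] = map v [0..<m]" if "\<forall>i<m. s i t \<noteq> 0" for t
    using that by (auto simp: clocks_value[OF s])
  have eq: "(\<lambda>t. if \<forall>i<m. s i t \<noteq> 0 then u t (map (\<lambda>i. s i t - 1) [0..<m]) else 0)
      = (\<lambda>t. if \<forall>i<m. s i t \<noteq> 0 then u t (map v [0..<m]) else 0)"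
    by (intro ext) (metis shift)
  have "\<forall>\<^sub>F t in sequentially. \<forall>i\<in>{..<m}. s i t \<noteq> 0"
    using clocks_eventually[OF s] by (intro eventually_ball_finite) auto
  then have "\<forall>\<^sub>F t in sequentially. (\<forall>i<m. s i t \<noteq> 0) \<and> u t (map v [0..<m]) \<noteq> 0"
    using clocks_eventually[OF u] by eventually_elim auto
  then show ?thesis
    unfolding eq clocks_def using clocks_mono[OF s] clocks_mono[OF u] clocks_value[OF u]
    by (auto elim!: eventually_mono)
qed

lemma clocks_seq:
  assumes "clocks s v" and "clocks (\<lambda>t. u t v) w"
  shows "clocks (\<lambda>t. if s t = 0 then 0 else u t (s t - 1)) w"
proof -
  have "(\<lambda>t. if s t = 0 then 0 else u t (s t - 1))
      = (\<lambda>t. if \<forall>i<1::nat. s t \<noteq> 0 then u t (hd (map (\<lambda>i. s t - 1) [0..<1])) else 0)"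
    by auto
  then show ?thesis
    using clocks_comp[of 1 "\<lambda>_. s" "\<lambda>_. v" "\<lambda>t xs. u t (hd xs)" w] assms by simp
qed

text \<open>search c j scans the states c 0, ..., c (j - 1) of computations (0: not halted,
  Suc a: halted with result a). It stays 0 while all of them have halted with a nonzero result,
  becomes 1 at the first one that has not halted, and Suc (Suc y) at the first y with result 0.\<close>

fun search :: "(nat \<Rightarrow> nat) \<Rightarrow> nat \<Rightarrow> nat" where
  "search c 0 = 0"
| "search c (Suc j) =
    (if search c j \<noteq> 0 then search c j
     else if c j = 0 then 1 else if c j = 1 then Suc (Suc j) else 0)"

lemma search_eq_0: "search c j = 0 \<longleftrightarrow> (\<forall>y<j. 2 \<le> c y)"
  by (induction j) (auto simp: less_Suc_eq)

lemma search_eq_Suc_Suc: "search c j = Suc (Suc y) \<longleftrightarrow> y < j \<and> c y = 1 \<and> (\<forall>z<y. 2 \<le> c z)"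
  by (induction j) (auto simp: search_eq_0 less_Suc_eq)

lemma clocks_search:
  assumes c: "\<And>y. clocks (\<lambda>t. c t y) (f y)" and "f y = 0"
  shows "clocks (\<lambda>t. search (c t) t - 1) (LEAST y. f y = 0)"
proof -
  define y0 where "y0 = (LEAST y. f y = 0)"
  have root: "f y0 = 0" and below: "\<And>z. z < y0 \<Longrightarrow> f z \<noteq> 0"
    unfolding y0_def using \<open>f y = 0\<close> by (auto intro: LeastI dest: not_less_Least)
  define halted where "halted t \<longleftrightarrow> y0 < t \<and> (\<forall>y\<le>y0. c t y \<noteq> 0)" for t
  have found: "search (c t) t = Suc (Suc y0)" if "halted t" for t
  proof -
    have "c t y = Suc (f y)" if "y \<le> y0" for y
      using that \<open>halted t\<close> clocks_value[OF c] unfolding halted_def by blast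
    then show ?thesis
      using \<open>halted t\<close> root below unfolding halted_def search_eq_Suc_Suc
      by (simp add: Suc_le_eq)
  qed
  have "halted t" if nonzero: "search (c t) t - 1 \<noteq> 0" for t
  proof -
    obtain y where "search (c t) t = Suc (Suc y)"
      using nonzero by (metis diff_0_eq_0 diff_Suc_1 not0_implies_Suc)
    then have "y < t" and cy: "c t y = 1" and cz: "\<And>z. z < y \<Longrightarrow> 2 \<le> c t z"
      by (auto simp: search_eq_Suc_Suc)
    have "f y = 0"
      using clocks_value[OF c, of t y] cy by simp
    moreover have "f z \<noteq> 0" if "z < y" for z
      using clocks_value[OF c, of t z] cz[OF that] by auto
    ultimately have "y = y0"
      using below root by (meson linorder_neqE_nat)
    with \<open>y < t\<close> cy cz show ?thesis
      unfolding halted_def by (fastforce simp: le_less)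
  qed
  then have halted_iff: "search (c t) t - 1 \<noteq> 0 \<longleftrightarrow> halted t" for t
    using found by force
  have "\<forall>\<^sub>F t in sequentially. \<forall>y\<in>{..y0}. c t y \<noteq> 0"
    using clocks_eventually[OF c] by (intro eventually_ball_finite) auto
  then have "\<forall>\<^sub>F t in sequentially. halted t"
    using eventually_gt_at_top[of y0] unfolding halted_def by eventually_elim auto
  moreover have "halted t'" if "halted t" "t \<le> t'" for t t'
    using that clocks_mono[OF c] unfolding halted_def by (meson order.strict_trans2)
  ultimately show ?thesis
    unfolding clocks_def halted_iff y0_def[symmetric] using found by auto
qed

definition prim_rec_clocked :: "nat \<Rightarrow> (nat list \<Rightarrow> nat) \<Rightarrow> bool" where
  "prim_rec_clocked n F \<longleftrightarrow>
     (\<exists>G. prim_rec (Suc n) G \<and> (\<forall>xs. length xs = n \<longrightarrow> clocks (\<lambda>t. G (t # xs)) (F xs)))"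

lemma prim_rec_clocked_zero: "prim_rec_clocked n (\<lambda>_. 0)"
  unfolding prim_rec_clocked_def
  by (intro exI[of _ "\<lambda>_. Suc 0"]) (simp add: prim_rec_const clocks_const)

lemma prim_rec_clocked_succ: "prim_rec_clocked 1 (\<lambda>xs. Suc (hd xs))"
proof -
  have "prim_rec 2 (\<lambda>ys. Suc (Suc (ys ! 1)))"
    by (intro prim_rec_comp1[OF prim_rec_succ] prim_rec_proj) simp
  then show ?thesis
    unfolding prim_rec_clocked_def
    by (intro exI[of _ "\<lambda>ys. Suc (Suc (ys ! 1))"])
      (auto simp: clocks_const length_Suc_conv numeral_2_eq_2)
qed

lemma prim_rec_clocked_proj: "i < n \<Longrightarrow> prim_rec_clocked n (\<lambda>xs. xs ! i)"
  unfolding prim_rec_clocked_def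
  by (intro exI[of _ "\<lambda>ys. Suc (ys ! Suc i)"])
    (simp add: clocks_const prim_rec_comp1[OF prim_rec_succ] prim_rec_proj)

lemma prim_rec_clocked_comp:
  assumes "prim_rec_clocked m g" and "\<And>i. i < m \<Longrightarrow> prim_rec_clocked n (hs i)"
  shows "prim_rec_clocked n (\<lambda>xs. g (map (\<lambda>i. hs i xs) [0..<m]))"
proof -
  obtain Gg where Gg: "prim_rec (Suc m) Gg"
    "\<And>vs. length vs = m \<Longrightarrow> clocks (\<lambda>t. Gg (t # vs)) (g vs)"
    using assms(1) unfolding prim_rec_clocked_def by blast
  obtain Gh where Gh: "\<And>i. i < m \<Longrightarrow> prim_rec (Suc n) (Gh i)"
    "\<And>i xs. i < m \<Longrightarrow> length xs = n \<Longrightarrow> clocks (\<lambda>t. Gh i (t # xs)) (hs i xs)"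
    using assms(2) unfolding prim_rec_clocked_def by metis
  have args: "prim_rec (Suc n) (\<lambda>ys. Gg (ys ! 0 # map (\<lambda>i. Gh i ys - 1) [0..<m]))"
    by (rule prim_rec_compose[OF Gg(1)])
      (intro prim_rec_list_Cons prim_rec_list_map prim_rec_proj prim_rec_minus prim_rec_const Gh(1);
        simp)
  define G where "G ys =
    (if \<forall>i<m. Gh i ys \<noteq> 0 then Gg (ys ! 0 # map (\<lambda>i. Gh i ys - 1) [0..<m]) else 0)" for ys
  have "prim_rec (Suc n) G"
    unfolding G_def by (intro prim_rec_if_all_nonzero Gh(1) args)
  moreover have "clocks (\<lambda>t. G (t # xs)) (g (map (\<lambda>i. hs i xs) [0..<m]))" if "length xs = n" for xs
  proof -
    have "clocks (\<lambda>t. if \<forall>i<m. Gh i (t # xs) \<noteq> 0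
        then Gg (t # map (\<lambda>i. Gh i (t # xs) - 1) [0..<m]) else 0) (g (map (\<lambda>i. hs i xs) [0..<m]))"
      by (rule clocks_comp[where u = "\<lambda>t vs. Gg (t # vs)" and v = "\<lambda>i. hs i xs"])
        (simp_all add: Gh(2) Gg(2) that)
    then show ?thesis
      unfolding G_def nth_Cons_0 .
  qed
  ultimately show ?thesis
    unfolding prim_rec_clocked_def by blast
qed

lemma prim_rec_clocked_prec:
  assumes "prim_rec_clocked n g" and "prim_rec_clocked (Suc (Suc n)) h"
  shows "prim_rec_clocked (Suc n) (\<lambda>xs. prim_rec_iter g h (hd xs) (tl xs))"
proof -
  obtain Gg where Gg: "prim_rec (Suc n) Gg"
    "\<And>xs. length xs = n \<Longrightarrow> clocks (\<lambda>t. Gg (t # xs)) (g xs)"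
    using assms(1) unfolding prim_rec_clocked_def by blast
  obtain Gh where Gh: "prim_rec (Suc (Suc (Suc n))) Gh"
    "\<And>xs. length xs = Suc (Suc n) \<Longrightarrow> clocks (\<lambda>t. Gh (t # xs)) (h xs)"
    using assms(2) unfolding prim_rec_clocked_def by blast
  text \<open>The clock t is carried along as the first parameter of the recursion on k:
    G (t # k # xs) = prim_rec_iter Gg H k (t # xs), and each step waits for the previous one.\<close>
  define H where
    "H ys = (if ys ! 1 = 0 then 0 else Gh (ys ! 2 # ys ! 0 # (ys ! 1 - 1) # drop 3 ys))" for ys
  define G where "G ys = prim_rec_iter Gg H (ys ! 1) (ys ! 0 # drop 2 ys)" for ys
  have H_step: "H (k # r # t # xs) = (if r = 0 then 0 else Gh (t # k # (r - 1) # xs))" for k r t xs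
    by (simp add: H_def)
  have "prim_rec (Suc (Suc (Suc n))) (\<lambda>ys. Gh (ys ! 2 # ys ! 0 # (ys ! 1 - 1) # drop 3 ys))"
    by (rule prim_rec_compose[OF Gh(1)])
      (intro prim_rec_list_Cons prim_rec_list_drop prim_rec_proj prim_rec_minus prim_rec_const;
        simp)
  then have "prim_rec (Suc (Suc (Suc n))) H"
    unfolding H_def by (intro prim_rec_if_zero prim_rec_proj prim_rec_const) simp_all
  then have "prim_rec (Suc (Suc n)) (\<lambda>zs. prim_rec_iter Gg H (hd zs) (tl zs))"
    by (rule prim_rec_prec[OF Gg(1)])
  then have "prim_rec (Suc (Suc n)) (\<lambda>ys. prim_rec_iter Gg H (hd (ys ! 1 # ys ! 0 # drop 2 ys))
      (tl (ys ! 1 # ys ! 0 # drop 2 ys)))"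
    by (rule prim_rec_compose) (intro prim_rec_list_Cons prim_rec_list_drop prim_rec_proj; simp)
  then have "prim_rec (Suc (Suc n)) G"
    unfolding G_def by simp
  moreover have "clocks (\<lambda>t. prim_rec_iter Gg H k (t # xs)) (prim_rec_iter g h k xs)"
    if "length xs = n" for k xs
  proof (induction k)
    case 0
    then show ?case using Gg(2)[OF that] by simp
  next
    case (Suc k)
    have "clocks (\<lambda>t. Gh (t # k # prim_rec_iter g h k xs # xs))
        (h (k # prim_rec_iter g h k xs # xs))"
      using Gh(2) that by simp
    from clocks_seq[where u = "\<lambda>t a. Gh (t # k # a # xs)", OF Suc.IH this] show ?case
      by (simp only: prim_rec_iter.simps H_step)
  qed
  ultimately show ?thesis
    unfolding prim_rec_clocked_def G_def by (auto simp: length_Suc_conv)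
qed

lemma prim_rec_clocked_mu:
  assumes "prim_rec_clocked (Suc n) g" and "\<And>xs. length xs = n \<Longrightarrow> \<exists>y. g (y # xs) = 0"
  shows "prim_rec_clocked n (\<lambda>xs. LEAST y. g (y # xs) = 0)"
proof -
  obtain Gg where Gg: "prim_rec (Suc (Suc n)) Gg"
    "\<And>xs. length xs = Suc n \<Longrightarrow> clocks (\<lambda>t. Gg (t # xs)) (g xs)"
    using assms(1) unfolding prim_rec_clocked_def by blast
  text \<open>H is a step of search applied to the states C (j # r # t # xs) = Gg (t # j # xs)
    at time t, so G (t # xs) = search (\<lambda>y. Gg (t # y # xs)) t - 1.\<close>
  define C where "C ys = Gg (ys ! 2 # ys ! 0 # drop 3 ys)" for ys
  define H where "H ys =
    (if ys ! 1 = 0 then (if C ys = 0 then 1 else if C ys - 1 = 0 then Suc (Suc (ys ! 0)) else 0)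
     else ys ! 1)" for ys
  define G where "G ys = prim_rec_iter (\<lambda>_. 0) H (ys ! 0) ys - 1" for ys
  have "prim_rec (Suc (Suc (Suc n))) C"
    unfolding C_def
    by (rule prim_rec_compose[OF Gg(1)])
      (intro prim_rec_list_Cons prim_rec_list_drop prim_rec_proj; simp)
  then have "prim_rec (Suc (Suc (Suc n))) H"
    unfolding H_def
    by (intro prim_rec_if_zero prim_rec_proj prim_rec_const prim_rec_minus
        prim_rec_comp1[OF prim_rec_succ]) simp_all
  then have "prim_rec (Suc (Suc n)) (\<lambda>zs. prim_rec_iter (\<lambda>_. 0) H (hd zs) (tl zs))"
    by (rule prim_rec_prec[OF prim_rec_zero])
  then have "prim_rec (Suc n) (\<lambda>ys. prim_rec_iter (\<lambda>_. 0) H (hd (ys ! 0 # ys)) (tl (ys ! 0 # ys)))"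
    by (rule prim_rec_compose) (intro prim_rec_list_Cons prim_rec_list_id prim_rec_proj; simp)
  then have "prim_rec (Suc n) G"
    unfolding G_def by (intro prim_rec_minus prim_rec_const) simp
  moreover have "clocks (\<lambda>t. G (t # xs)) (LEAST y. g (y # xs) = 0)" if len: "length xs = n" for xs
  proof -
    have "prim_rec_iter (\<lambda>_. 0) H j (t # xs) = search (\<lambda>y. Gg (t # y # xs)) j" for j t
      by (induction j) (simp_all add: H_def C_def)
    moreover obtain y where "g (y # xs) = 0"
      using assms(2)[OF len] ..
    then have "clocks (\<lambda>t. search (\<lambda>y. Gg (t # y # xs)) t - 1) (LEAST y. g (y # xs) = 0)"
      by (rule clocks_search[where f = "\<lambda>y. g (y # xs)", rotated]) (simp add: Gg(2) len)
    ultimately show ?thesis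
      by (simp add: G_def)
  qed
  ultimately show ?thesis
    unfolding prim_rec_clocked_def by blast
qed

lemma Rf_imp_prim_rec_clocked: "Rf n F \<Longrightarrow> prim_rec_clocked n F"
  by (induction rule: Rf.induct)
    (blast intro: prim_rec_clocked_zero prim_rec_clocked_succ prim_rec_clocked_proj
      prim_rec_clocked_comp prim_rec_clocked_prec prim_rec_clocked_mu)+

section \<open>Dovetailing\<close>

fun dovetail :: "(nat \<Rightarrow> nat \<Rightarrow> bool) \<Rightarrow> nat \<Rightarrow> nat" where
  "dovetail P 0 = 0"
| "dovetail P (Suc t) = (if P t (dovetail P t) then Suc (dovetail P t) else dovetail P t)"

lemma mono_dovetail: "mono (dovetail P)"
  unfolding mono_iff_le_Suc by simp

lemma dovetail_eq_Suc_imp: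
  assumes "\<And>t t' m. t \<le> t' \<Longrightarrow> P t m \<Longrightarrow> P t' m" and "dovetail P t = Suc m"
  shows "P t m"
  using assms(2) by (induction t) (auto split: if_splits intro: assms(1)[OF le_SucI[OF order_refl]])

lemma dovetail_unbounded:
  assumes "\<And>m. \<forall>\<^sub>F t in sequentially. P t m"
  shows "\<exists>t. k \<le> dovetail P t"
proof (induction k)
  case (Suc k)
  then obtain t where t: "k \<le> dovetail P t" ..
  obtain N where N: "\<And>t'. N \<le> t' \<Longrightarrow> P t' k"
    using assms[of k] unfolding eventually_sequentially by blast
  have "k \<le> dovetail P (max t N)"
    using t mono_dovetail[of P] by (meson le_trans max.cobounded1 monoD)
  then have "Suc k \<le> dovetail P (Suc (max t N))"
    using N[of "max t N"] by (cases "k < dovetail P (max t N)") auto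
  then show ?case ..
qed simp

lemma PR1_dovetail:
  assumes "prim_rec 2 D"
  shows "PR1 (dovetail (\<lambda>t m. D [t, m] \<noteq> 0))"
proof -
  define H where "H ys = (if D [ys ! 0, ys ! 1] = 0 then ys ! 1 else Suc (ys ! 1))" for ys
  have "prim_rec 2 (\<lambda>ys. D [ys ! 0, ys ! 1])"
    by (rule prim_rec_compose[OF assms])
      (unfold numeral_2_eq_2, intro prim_rec_list_Cons prim_rec_list_Nil prim_rec_proj; simp)
  then have "prim_rec 2 H"
    unfolding H_def
    by (intro prim_rec_if_zero prim_rec_proj prim_rec_comp1[OF prim_rec_succ]) simp_all
  then have pr: "prim_rec 1 (\<lambda>xs. prim_rec_iter (\<lambda>_. 0) H (hd xs) (tl xs))"
    using prim_rec_prec[of 0] prim_rec_zero by (simp add: numeral_eq_Suc)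
  have "prim_rec_iter (\<lambda>_. 0) H t [] = dovetail (\<lambda>t m. D [t, m] \<noteq> 0) t" for t
    by (induction t) (simp_all add: H_def)
  then show ?thesis
    unfolding PR1_iff_prim_rec by (intro prim_rec_cong[OF pr]) (auto simp: length_Suc_conv)
qed

section \<open>Primitive recursive approximations\<close>

lemma PR_sequenceI:
  assumes "PR1 f" and "PR1 g" and "PR1 h"
    and "\<And>x. A x = (of_nat (f x) - of_nat (g x)) / (of_nat (h x) + 1)"
  shows "PR_sequence A"
  using assms unfolding PR_sequence_def F_sequence_def by blast

lemma R1_clocked:
  assumes "R1 f"
  obtains G where "prim_rec 2 G" and "\<And>x. clocks (\<lambda>t. G [t, x]) (f x)"
proof -
  obtain F where "Rf 1 F" and f: "\<And>x. f x = F [x]"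
    using assms unfolding R1_def by blast
  then obtain G where "prim_rec (Suc 1) G"
    and G: "\<And>xs. length xs = 1 \<Longrightarrow> clocks (\<lambda>t. G (t # xs)) (F xs)"
    using Rf_imp_prim_rec_clocked unfolding prim_rec_clocked_def by blast
  show ?thesis
  proof (rule that)
    show "prim_rec 2 G"
      using \<open>prim_rec (Suc 1) G\<close> by (simp add: numeral_2_eq_2)
    show "clocks (\<lambda>t. G [t, x]) (f x)" for x
      using G[of "[x]"] f by simp
  qed
qed

lemma PR1_readout:
  assumes "PR1 M" and "prim_rec 2 G"
  shows "PR1 (\<lambda>x. if M x = 0 then 0 else G [x, M x - 1] - 1)"
proof -
  have M: "prim_rec 1 (\<lambda>xs. M (xs ! 0))"
    using assms(1) unfolding PR1_iff_prim_rec .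
  have "prim_rec 1 (\<lambda>xs. G [xs ! 0, M (xs ! 0) - 1])"
    by (rule prim_rec_compose[OF assms(2)[unfolded numeral_2_eq_2]])
      (intro prim_rec_list_Cons prim_rec_list_Nil prim_rec_proj prim_rec_minus prim_rec_const M;
        simp)
  then show ?thesis
    unfolding PR1_iff_prim_rec by (intro prim_rec_if_zero prim_rec_minus prim_rec_const M)
qed

lemma R_sequence_dovetailed:
  assumes "R_sequence A"
  obtains M where "PR1 M" and "\<And>k. \<exists>x. k \<le> M x"
    and "PR_sequence (\<lambda>x. case M x of 0 \<Rightarrow> 0 | Suc m \<Rightarrow> A m)"
proof -
  obtain f g h where "R1 f" "R1 g" "R1 h"
    and A: "\<And>x. A x = (of_nat (f x) - of_nat (g x)) / (of_nat (h x) + 1)"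
    using assms unfolding R_sequence_def F_sequence_def by blast
  obtain Gf where "prim_rec 2 Gf" and clocks_f: "\<And>x. clocks (\<lambda>t. Gf [t, x]) (f x)"
    by (rule R1_clocked[OF \<open>R1 f\<close>]) blast
  obtain Gg where "prim_rec 2 Gg" and clocks_g: "\<And>x. clocks (\<lambda>t. Gg [t, x]) (g x)"
    by (rule R1_clocked[OF \<open>R1 g\<close>]) blast
  obtain Gh where "prim_rec 2 Gh" and clocks_h: "\<And>x. clocks (\<lambda>t. Gh [t, x]) (h x)"
    by (rule R1_clocked[OF \<open>R1 h\<close>]) blast
  define halted where "halted t m \<longleftrightarrow> Gf [t, m] \<noteq> 0 \<and> Gg [t, m] \<noteq> 0 \<and> Gh [t, m] \<noteq> 0" for t m
  define M where "M = dovetail halted"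
  have halted_eq: "halted = (\<lambda>t m. Gf [t, m] * Gg [t, m] * Gh [t, m] \<noteq> 0)"
    by (simp add: halted_def fun_eq_iff)
  have "prim_rec 2 (\<lambda>ys. Gf ys * Gg ys * Gh ys)"
    by (intro prim_rec_times \<open>prim_rec 2 Gf\<close> \<open>prim_rec 2 Gg\<close> \<open>prim_rec 2 Gh\<close>)
  then have "PR1 M"
    unfolding M_def halted_eq by (rule PR1_dovetail)
  moreover have "\<exists>x. k \<le> M x" for k
  proof -
    have "\<forall>\<^sub>F t in sequentially. halted t m" for m
      using clocks_eventually[OF clocks_f] clocks_eventually[OF clocks_g]
        clocks_eventually[OF clocks_h]
      unfolding halted_def by (simp add: eventually_conj_iff)
    then show ?thesis
      unfolding M_def by (rule dovetail_unbounded)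
  qed
  moreover have "Gf [x, m] = Suc (f m)" "Gg [x, m] = Suc (g m)" "Gh [x, m] = Suc (h m)"
    if "M x = Suc m" for x m
  proof -
    have "halted x m"
      using that unfolding M_def
    proof (rule dovetail_eq_Suc_imp[rotated])
      show "halted t' k" if "t \<le> t'" and "halted t k" for t t' k
        using that clocks_mono[OF clocks_f] clocks_mono[OF clocks_g] clocks_mono[OF clocks_h]
        unfolding halted_def by blast
    qed
    then show "Gf [x, m] = Suc (f m)" "Gg [x, m] = Suc (g m)" "Gh [x, m] = Suc (h m)"
      unfolding halted_def
      by (auto intro: clocks_value[OF clocks_f] clocks_value[OF clocks_g] clocks_value[OF clocks_h])
  qed
  then have "PR_sequence (\<lambda>x. case M x of 0 \<Rightarrow> 0 | Suc m \<Rightarrow> A m)"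
    by (intro PR_sequenceI[OF PR1_readout[OF \<open>PR1 M\<close> \<open>prim_rec 2 Gf\<close>]
          PR1_readout[OF \<open>PR1 M\<close> \<open>prim_rec 2 Gg\<close>] PR1_readout[OF \<open>PR1 M\<close> \<open>prim_rec 2 Gh\<close>]])
      (simp add: A split: nat.split)
  ultimately show ?thesis
    using that by blast
qed

lemma PR_sequence_reciprocal:
  assumes "PR1 M"
  shows "PR_sequence (\<lambda>x. case M x of 0 \<Rightarrow> of_nat c | Suc m \<Rightarrow> 1 / (of_nat m + 1))"
proof (rule PR_sequenceI)
  have M: "prim_rec 1 (\<lambda>xs. M (xs ! 0))"
    using assms unfolding PR1_iff_prim_rec .
  show "PR1 (\<lambda>x. if M x = 0 then c else 1)" and "PR1 (\<lambda>_. 0)" and "PR1 (\<lambda>x. M x - 1)"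
    unfolding PR1_iff_prim_rec by (intro prim_rec_if_zero prim_rec_minus prim_rec_const M)+
qed (simp split: nat.split)

lemma exists_case_reciprocal_less:
  fixes \<epsilon> :: rat
  assumes "\<And>k. \<exists>x. k \<le> M x" and "\<epsilon> > 0"
  shows "\<exists>x. \<bar>case M x of 0 \<Rightarrow> c | Suc m \<Rightarrow> 1 / (of_nat m + 1)\<bar> < \<epsilon>"
proof -
  obtain k :: nat where "k > 0" and k: "inverse (of_nat k) < \<epsilon>"
    using ex_inverse_of_nat_less[OF assms(2)] by blast
  obtain x where "k \<le> M x"
    using assms(1) ..
  then obtain m where "M x = Suc m" and "k \<le> Suc m"
    using \<open>k > 0\<close> by (cases "M x") auto
  then have "\<bar>case M x of 0 \<Rightarrow> c | Suc m \<Rightarrow> 1 / (of_nat m + 1)\<bar> \<le> inverse (of_nat k)"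
    using \<open>k > 0\<close> by (simp add: field_simps)
  with k show ?thesis
    by (meson order.strict_trans1)
qed

theorem mainTheorem18:
  fixes \<alpha> :: real
  assumes "computable_real \<alpha>"
  shows "\<exists>A E. PR_sequence A \<and> PR_sequence E \<and>
           (\<forall>\<epsilon>>0. \<exists>x. \<bar>E x\<bar> < \<epsilon>) \<and>
           (\<forall>x. \<bar>real_of_rat (A x) - \<alpha>\<bar> \<le> real_of_rat (E x))"
proof -
  obtain A where "R_sequence A" and A: "\<And>x. \<bar>real_of_rat (A x) - \<alpha>\<bar> \<le> 1 / (real x + 1)"
    using assms unfolding computable_real_def by blast
  obtain M where "PR1 M" and M: "\<And>k. \<exists>x. k \<le> M x"
    and PR_A': "PR_sequence (\<lambda>x. case M x of 0 \<Rightarrow> 0 | Suc m \<Rightarrow> A m)"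
    using R_sequence_dovetailed[OF \<open>R_sequence A\<close>] by blast
  define E :: "nat \<Rightarrow> rat"
    where "E = (\<lambda>x. case M x of 0 \<Rightarrow> of_nat (nat \<lceil>\<bar>\<alpha>\<bar>\<rceil>) | Suc m \<Rightarrow> 1 / (of_nat m + 1))"
  have "PR_sequence E"
    unfolding E_def using \<open>PR1 M\<close> by (rule PR_sequence_reciprocal)
  moreover have "\<forall>\<epsilon>>0. \<exists>x. \<bar>E x\<bar> < \<epsilon>"
    unfolding E_def using M by (blast intro: exists_case_reciprocal_less)
  moreover have "\<bar>real_of_rat (case M x of 0 \<Rightarrow> 0 | Suc m \<Rightarrow> A m) - \<alpha>\<bar> \<le> real_of_rat (E x)" for x
    using A by (cases "M x") (simp_all add: E_def of_rat_divide of_rat_add)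
  ultimately show ?thesis
    using PR_A' by blast
qed

end
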